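(* Let $Y$ be a real Banach space. The norm of $Y$ is Gâteaux differentiable (at every nonzero point) if and only if every closed linear subspace $X$ of $Y$ has property wU in $Y$.
   Context: A closed subspace $X$ of a Banach space $Y$ has property wU in $Y$ if every norm-attaining functional $x^*\in X^*$ (i.e. $x^*(x)=\|x^*\|$ for some $x$ in the unit sphere of $X$) has a unique Hahn–Banach extension to $Y$, i.e. there is exactly one $y^*\in Y^*$ with $y^*|_X=x^*$ and $\|y^*\|=\|x^*\|$. *)

theory Defs
  imports "HOL-Analysis.Analysis"
begin

text \<open>A bounded linear functional on the subspace X (values outside X are irrelevant).\<close>
definition functional_on :: "'a::real_normed_vector set \<Rightarrow> ('a \<Rightarrow> real) \<Rightarrow> bool" where
  "functional_on X f \<longleftrightarrow>
     (\<forall>x\<in>X. \<forall>y\<in>X. f (x + y) = f x + f y) \<and>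
     (\<forall>c. \<forall>x\<in>X. f (c *\<^sub>R x) = c * f x) \<and>
     (\<exists>K. \<forall>x\<in>X. \<bar>f x\<bar> \<le> K * norm x)"

definition fnorm_on :: "'a::real_normed_vector set \<Rightarrow> ('a \<Rightarrow> real) \<Rightarrow> real" where
  "fnorm_on X f = Sup ((\<lambda>x. \<bar>f x\<bar>) ` {x\<in>X. norm x \<le> 1})"

definition norm_attaining_on :: "'a::real_normed_vector set \<Rightarrow> ('a \<Rightarrow> real) \<Rightarrow> bool" where
  "norm_attaining_on X f \<longleftrightarrow> (\<exists>x\<in>X. norm x = 1 \<and> f x = fnorm_on X f)"

definition HB_extensions :: "'a::real_normed_vector set \<Rightarrow> ('a \<Rightarrow> real) \<Rightarrow> ('a \<Rightarrow> real) set" where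
  "HB_extensions X f = {g. bounded_linear g \<and> (\<forall>x\<in>X. g x = f x) \<and> onorm g = fnorm_on X f}"

definition property_wU :: "'a::real_normed_vector set \<Rightarrow> bool" where
  "property_wU X \<longleftrightarrow>
     (\<forall>f. functional_on X f \<and> norm_attaining_on X f \<longrightarrow> (\<exists>!g. g \<in> HB_extensions X f))"

definition gateaux_differentiable_at :: "('a::real_normed_vector \<Rightarrow> real) \<Rightarrow> 'a \<Rightarrow> bool" where
  "gateaux_differentiable_at F x \<longleftrightarrow>
     (\<exists>L. bounded_linear L \<and> (\<forall>h. ((\<lambda>t. F (x + t *\<^sub>R h)) has_real_derivative L h) (at 0)))"

end

theory Submission
  imports Defs
begin

text \<open>If the norm is Gateaux differentiable at x0 with derivative L, then any functional g with
  g x0 = norm x0 and norm g \<le> 1 satisfies norm x0 + t * g h \<le> norm (x0 + t h), so g h is at most the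
  one-sided derivative L h in every direction h; applied to -h this gives g = L. Hence a functional
  on X attaining its norm M at x0 coincides with M L on X, and M L is its only Hahn-Banach extension.

  Conversely, property wU of the line through y makes the norm-one functional g with g y = norm y
  unique. The right derivative of t \<mapsto> norm (y + t h) at 0 is at least g h. If it exceeded some
  c > g h, the functional a y + b h \<mapsto> a norm y + b c would be dominated by the norm on the plane
  spanned by y and h, and property wU of that plane would provide a norm-one functional G with
  G y = norm y but G h = c \<noteq> g h. So both one-sided derivatives equal g h.\<close>

section \<open>Functionals on subspaces\<close>

lemma functional_on_linear:
  assumes "linear f" "\<forall>x\<in>X. \<bar>f x\<bar> \<le> K * norm x"
  shows "functional_on X f"
  using assms by (auto simp: functional_on_def linear_add linear_scale)

lemma functional_on_neg:
  assumes "functional_on X f" "x \<in> X"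
  shows "f (- x) = - f x"
  using assms unfolding functional_on_def by (metis mult_minus1 scaleR_minus1_left)

lemma fnorm_on_bound:
  assumes f: "functional_on X f" and X: "subspace X" and x: "x \<in> X"
  shows "\<bar>f x\<bar> \<le> fnorm_on X f * norm x"
proof -
  obtain K where K: "\<forall>x\<in>X. \<bar>f x\<bar> \<le> K * norm x"
    using f unfolding functional_on_def by blast
  have bdd: "bdd_above ((\<lambda>x. \<bar>f x\<bar>) ` {x\<in>X. norm x \<le> 1})"
  proof (rule bdd_aboveI2)
    fix w assume w: "w \<in> {x\<in>X. norm x \<le> 1}"
    then have "\<bar>f w\<bar> \<le> K * norm w" using K by auto
    also have "\<dots> \<le> \<bar>K\<bar> * norm w" by (simp add: mult_right_mono)
    also have "\<dots> \<le> \<bar>K\<bar>" using w by (simp add: mult_left_le)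
    finally show "\<bar>f w\<bar> \<le> \<bar>K\<bar>" .
  qed
  have unit_bound: "\<bar>f z\<bar> \<le> fnorm_on X f" if "z \<in> X" "norm z \<le> 1" for z
    unfolding fnorm_on_def by (rule cSup_upper[OF _ bdd]) (use that in auto)
  show ?thesis
  proof (cases "x = 0")
    case True
    have "f (0 *\<^sub>R 0) = 0 * f 0"
      using f X unfolding functional_on_def by (blast intro: subspace_0)
    with True show ?thesis by simp
  next
    case False
    have "f ((1 / norm x) *\<^sub>R x) = f x / norm x"
      using f x unfolding functional_on_def by simp
    moreover have "\<bar>f ((1 / norm x) *\<^sub>R x)\<bar> \<le> fnorm_on X f"
      using unit_bound X x False by (simp add: subspace_scale)
    ultimately show ?thesis using False by (simp add: abs_divide divide_le_eq mult.commute)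
  qed
qed

lemma fnorm_on_eq_1:
  assumes "\<forall>x\<in>X. \<bar>f x\<bar> \<le> norm x" "x1 \<in> X" "norm x1 = 1" "f x1 = 1"
  shows "fnorm_on X f = 1"
  unfolding fnorm_on_def
proof (rule cSup_eq_maximum)
  show "1 \<in> (\<lambda>x. \<bar>f x\<bar>) ` {x \<in> X. norm x \<le> 1}" using assms by force
  show "z \<le> 1" if "z \<in> (\<lambda>x. \<bar>f x\<bar>) ` {x \<in> X. norm x \<le> 1}" for z
  proof -
    from that obtain x where "x \<in> X" "norm x \<le> 1" "z = \<bar>f x\<bar>" by blast
    with assms(1) show ?thesis by fastforce
  qed
qed

lemma property_wU_unique_norm_one_extension:
  assumes "property_wU X" "linear f" "\<forall>x\<in>X. \<bar>f x\<bar> \<le> norm x"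
    and "x1 \<in> X" "norm x1 = 1" "f x1 = 1"
  shows "\<exists>!g. bounded_linear g \<and> (\<forall>x\<in>X. g x = f x) \<and> onorm g = 1"
proof -
  have "functional_on X f" using assms(2,3) by (intro functional_on_linear[where K = 1]) auto
  moreover have fnorm: "fnorm_on X f = 1" using assms(3-6) by (rule fnorm_on_eq_1)
  moreover from this have "norm_attaining_on X f"
    using assms(4-6) unfolding norm_attaining_on_def by auto
  ultimately have "\<exists>!g. g \<in> HB_extensions X f"
    using assms(1) unfolding property_wU_def by blast
  then show ?thesis unfolding HB_extensions_def fnorm by simp
qed

section \<open>Injective linear images of Euclidean spaces\<close>

lemma injective_linear_bounded_below:
  fixes F :: "'b::euclidean_space \<Rightarrow> 'a::real_normed_vector"
  assumes F: "linear F" "inj F"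
  obtains e where "e > 0" "\<And>p. e * norm p \<le> norm (F p)"
proof -
  have "continuous_on (sphere 0 1) (\<lambda>p. norm (F p))"
    using F(1) by (intro continuous_intros linear_continuous_on linear_conv_bounded_linear[THEN iffD1])
  moreover have "sphere (0::'b) 1 \<noteq> {}" by simp
  ultimately obtain p0 where p0: "p0 \<in> sphere 0 1" and min: "\<forall>p\<in>sphere 0 1. norm (F p0) \<le> norm (F p)"
    using continuous_attains_inf[OF compact_sphere] by blast
  have "F p0 \<noteq> 0" using p0 F linear_injective_0 by fastforce
  then have e0: "norm (F p0) > 0" by simp
  have "norm (F p0) * norm p \<le> norm (F p)" for p
  proof (cases "p = 0")
    case False
    have "norm (F p0) \<le> norm (F ((1 / norm p) *\<^sub>R p))" using min False by simp
    also have "\<dots> = norm (F p) / norm p" using linear_scale[OF F(1)] by simp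
    finally show ?thesis using False by (simp add: le_divide_eq)
  qed simp
  with e0 show thesis using that by blast
qed

lemma closed_range_injective_linear:
  fixes F :: "'b::euclidean_space \<Rightarrow> 'a::real_normed_vector"
  assumes "linear F" "inj F"
  shows "closed (range F)"
proof -
  obtain e where "e > 0" "\<And>p. e * norm p \<le> norm (F p)"
    using injective_linear_bounded_below[OF assms] by blast
  then have "complete (range F)"
    using assms(1) by (intro complete_isometric_image) (auto simp: linear_conv_bounded_linear complete_UNIV)
  then show ?thesis by (rule complete_imp_closed)
qed

lemma linear_functional_through_injective:
  fixes F :: "'b::real_vector \<Rightarrow> 'a::real_vector"
  assumes "linear F" "inj F" "linear \<psi>"
  obtains \<phi> :: "'a \<Rightarrow> real" where "linear \<phi>" "\<And>p. \<phi> (F p) = \<psi> p"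
proof -
  obtain G where "linear G" "G \<circ> F = id"
    using linear_injective_left_inverse[OF assms(1,2)] by blast
  then show thesis
    using that[of "\<psi> \<circ> G"] assms(3) by (simp add: linear_compose pointfree_idE)
qed

section \<open>Difference quotients of the norm\<close>

lemma norm_difference_quotient_mono:
  fixes y h :: "'a::real_normed_vector"
  assumes "0 < s" "s \<le> t"
  shows "(norm (y + s *\<^sub>R h) - norm y) / s \<le> (norm (y + t *\<^sub>R h) - norm y) / t"
proof -
  have t: "0 < t" using assms by simp
  have "y + s *\<^sub>R h = (1 - s / t) *\<^sub>R y + (s / t) *\<^sub>R (y + t *\<^sub>R h)"
    using t by (simp add: algebra_simps)
  then have "norm (y + s *\<^sub>R h) \<le> norm ((1 - s / t) *\<^sub>R y) + norm ((s / t) *\<^sub>R (y + t *\<^sub>R h))"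
    by (metis norm_triangle_ineq)
  also have "\<dots> = (1 - s / t) * norm y + (s / t) * norm (y + t *\<^sub>R h)"
    using assms t by simp
  finally have "norm (y + s *\<^sub>R h) - norm y \<le> (s / t) * (norm (y + t *\<^sub>R h) - norm y)"
    by (simp add: algebra_simps)
  then have "norm (y + s *\<^sub>R h) - norm y \<le> ((norm (y + t *\<^sub>R h) - norm y) / t) * s"
    by (simp add: field_simps)
  then show ?thesis using assms(1) by (simp add: pos_divide_le_eq)
qed

lemma norm_slope_le_derivative:
  fixes x h :: "'a::real_normed_vector"
  assumes D: "((\<lambda>t. norm (x + t *\<^sub>R h)) has_real_derivative D) (at 0)"
    and c: "\<And>t. 0 < t \<Longrightarrow> norm x + t * c \<le> norm (x + t *\<^sub>R h)"
  shows "c \<le> D"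
proof -
  have "((\<lambda>t. (norm (x + t *\<^sub>R h) - norm x) / t) \<longlongrightarrow> D) (at_right 0)"
    using D by (simp add: has_field_derivative_iff filterlim_at_split)
  moreover have "\<forall>\<^sub>F t in at_right 0. c \<le> (norm (x + t *\<^sub>R h) - norm x) / t"
    using c by (auto simp: eventually_at_right_field le_divide_eq algebra_simps intro: exI[of _ 1])
  ultimately show ?thesis by (rule tendsto_lowerbound) simp
qed

lemma norm_difference_quotient_tendsto_right:
  fixes y h :: "'a::real_normed_vector"
  assumes lower: "\<And>t. 0 < t \<Longrightarrow> norm y + t * d \<le> norm (y + t *\<^sub>R h)"
    and upper: "\<And>c. d < c \<Longrightarrow> \<exists>t>0. norm (y + t *\<^sub>R h) < norm y + t * c"
  shows "((\<lambda>t. (norm (y + t *\<^sub>R h) - norm y) / t) \<longlongrightarrow> d) (at_right 0)"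
proof (rule order_tendstoI)
  fix a assume "a < d"
  have "a < (norm (y + t *\<^sub>R h) - norm y) / t" if "0 < t" for t
  proof -
    have "t * a < t * d" using \<open>a < d\<close> that by simp
    with lower[OF that] have "a * t < norm (y + t *\<^sub>R h) - norm y" by (simp add: mult.commute)
    with that show ?thesis by (simp add: less_divide_eq)
  qed
  then show "\<forall>\<^sub>F t in at_right 0. a < (norm (y + t *\<^sub>R h) - norm y) / t"
    by (auto simp: eventually_at_right_field intro: exI[of _ 1])
next
  fix c assume "d < c"
  then obtain t where t: "0 < t" "norm (y + t *\<^sub>R h) < norm y + t * c"
    using upper by blast
  have "(norm (y + s *\<^sub>R h) - norm y) / s < c" if "0 < s" "s < t" for s
  proof -
    have "(norm (y + s *\<^sub>R h) - norm y) / s \<le> (norm (y + t *\<^sub>R h) - norm y) / t"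
      using that by (intro norm_difference_quotient_mono) auto
    also have "\<dots> < c" using t by (simp add: divide_less_eq algebra_simps)
    finally show ?thesis .
  qed
  with t(1) show "\<forall>\<^sub>F s in at_right 0. (norm (y + s *\<^sub>R h) - norm y) / s < c"
    by (auto simp: eventually_at_right_field)
qed

lemma norm_line_has_real_derivative:
  fixes y h :: "'a::real_normed_vector"
  assumes "((\<lambda>t. (norm (y + t *\<^sub>R h) - norm y) / t) \<longlongrightarrow> d) (at_right 0)"
    and "((\<lambda>t. (norm (y + t *\<^sub>R (- h)) - norm y) / t) \<longlongrightarrow> - d) (at_right 0)"
  shows "((\<lambda>t. norm (y + t *\<^sub>R h)) has_real_derivative d) (at 0)"
proof -
  have "((\<lambda>t. (norm (y + (- t) *\<^sub>R h) - norm y) / - t) \<longlongrightarrow> d) (at_right 0)"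
    using tendsto_minus[OF assms(2)] by simp
  then have "((\<lambda>t. (norm (y + t *\<^sub>R h) - norm y) / t) \<longlongrightarrow> d) (at 0)"
    using assms(1) by (simp add: filterlim_at_split filterlim_at_left_to_right)
  then show ?thesis by (simp add: has_field_derivative_iff)
qed

section \<open>Norming functionals and the Gateaux derivative of the norm\<close>

definition norming_functional :: "'a::real_normed_vector \<Rightarrow> ('a \<Rightarrow> real) \<Rightarrow> bool" where
  "norming_functional y g \<longleftrightarrow> bounded_linear g \<and> onorm g = 1 \<and> g y = norm y"

lemma norming_functional_bound:
  assumes "norming_functional y g"
  shows "\<bar>g x\<bar> \<le> norm x"
  using onorm[of g x] assms by (simp add: norming_functional_def)

lemma norming_functional_line:
  assumes "norming_functional y g"
  shows "norm y + t * g h \<le> norm (y + t *\<^sub>R h)"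
proof -
  have "g (y + t *\<^sub>R h) = norm y + t * g h"
    using assms by (simp add: norming_functional_def linear_add linear_scale bounded_linear.linear)
  then show ?thesis using norming_functional_bound[OF assms, of "y + t *\<^sub>R h"] by simp
qed

lemma norm_derivative_norming_functional:
  fixes x :: "'a::real_normed_vector"
  assumes L: "bounded_linear L" "\<And>h. ((\<lambda>t. norm (x + t *\<^sub>R h)) has_real_derivative L h) (at 0)"
    and "x \<noteq> 0"
  shows "norming_functional x L"
proof -
  have ge: "- norm h \<le> L h" for h
  proof (rule norm_slope_le_derivative[OF L(2)])
    fix t :: real assume "0 < t"
    then show "norm x + t * - norm h \<le> norm (x + t *\<^sub>R h)"
      using norm_diff_ineq[of x "t *\<^sub>R h"] by simp
  qed
  have bound: "\<bar>L h\<bar> \<le> norm h" for h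
    using ge[of h] ge[of "- h"] linear_neg[OF bounded_linear.linear[OF L(1)]] by simp
  have "norm x \<le> L x"
  proof (rule norm_slope_le_derivative[OF L(2)])
    fix t :: real assume "0 < t"
    have "x + t *\<^sub>R x = (1 + t) *\<^sub>R x" by (simp add: scaleR_add_left)
    then have "norm (x + t *\<^sub>R x) = (1 + t) * norm x" using \<open>0 < t\<close> by simp
    then show "norm x + t * norm x \<le> norm (x + t *\<^sub>R x)" by (simp add: algebra_simps)
  qed
  then have Lx: "L x = norm x" using bound[of x] by simp
  have "onorm L \<le> 1" using bound by (intro onorm_bound) auto
  moreover have "norm (L x) \<le> onorm L * norm x" by (rule onorm[OF L(1)])
  ultimately have "onorm L = 1" using Lx \<open>x \<noteq> 0\<close> by simp
  with L(1) Lx show ?thesis by (simp add: norming_functional_def)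
qed

lemma dominated_functional_eq_norm_derivative:
  fixes x :: "'a::real_normed_vector"
  assumes L: "linear L" "\<And>h. ((\<lambda>t. norm (x + t *\<^sub>R h)) has_real_derivative L h) (at 0)"
    and S: "subspace S" "x \<in> S"
    and \<phi>: "functional_on S \<phi>" "\<forall>z\<in>S. \<phi> z \<le> M * norm z" "\<phi> x = M * norm x"
    and M: "0 \<le> M"
  shows "\<forall>z\<in>S. \<phi> z = M * L z"
proof -
  have le: "\<phi> z \<le> M * L z" if z: "z \<in> S" for z
  proof (cases "M = 0")
    case True
    then show ?thesis using \<phi>(2) z by simp
  next
    case False
    then have "M > 0" using M by simp
    have "\<phi> z / M \<le> L z"
    proof (rule norm_slope_le_derivative[OF L(2)])
      fix t :: real assume "0 < t"
      have "x + t *\<^sub>R z \<in> S" using S z by (simp add: subspace_add subspace_scale)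
      moreover have "\<phi> (x + t *\<^sub>R z) = M * norm x + t * \<phi> z"
        using \<phi>(1,3) S z unfolding functional_on_def by (simp add: subspace_scale)
      ultimately have "M * norm x + t * \<phi> z \<le> M * norm (x + t *\<^sub>R z)" using \<phi>(2) by metis
      with \<open>M > 0\<close> show "norm x + t * (\<phi> z / M) \<le> norm (x + t *\<^sub>R z)"
        by (simp add: field_simps)
    qed
    with \<open>M > 0\<close> show ?thesis by (simp add: divide_le_eq mult.commute)
  qed
  show ?thesis
  proof
    fix z assume z: "z \<in> S"
    have "- \<phi> z \<le> - (M * L z)"
      using le[of "- z"] functional_on_neg[OF \<phi>(1) z] linear_neg[OF L(1)] S z
      by (simp add: subspace_neg)
    with le[OF z] show "\<phi> z = M * L z" by simp
  qed
qed

lemma bounded_linear_eq_scaled_norm_derivative: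
  fixes x :: "'a::real_normed_vector"
  assumes L: "linear L" "\<And>h. ((\<lambda>t. norm (x + t *\<^sub>R h)) has_real_derivative L h) (at 0)"
    and g: "bounded_linear g" "onorm g = M" "g x = M * norm x"
  shows "g = (\<lambda>z. M * L z)"
proof -
  have g_bound: "\<bar>g z\<bar> \<le> M * norm z" for z
    using onorm[OF g(1), of z] g(2) by simp
  have "functional_on UNIV g"
    using g_bound by (intro functional_on_linear bounded_linear.linear[OF g(1)]) auto
  moreover have "\<forall>z\<in>UNIV. g z \<le> M * norm z" using g_bound abs_le_D1 by blast
  moreover have "0 \<le> M" using onorm_pos_le[OF g(1)] g(2) by simp
  ultimately have "\<forall>z\<in>UNIV. g z = M * L z"
    using g(3) by (intro dominated_functional_eq_norm_derivative[OF L subspace_UNIV]) auto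
  then show ?thesis by auto
qed

lemma property_wU_if_norm_gateaux_differentiable:
  fixes X :: "'a::real_normed_vector set"
  assumes G: "\<forall>y::'a. y \<noteq> 0 \<longrightarrow> gateaux_differentiable_at norm y" and X: "subspace X"
  shows "property_wU X"
  unfolding property_wU_def
proof (intro allI impI, elim conjE)
  fix f assume f: "functional_on X f" and "norm_attaining_on X f"
  define M where "M = fnorm_on X f"
  then obtain x where x: "x \<in> X" "norm x = 1" "f x = M"
    using \<open>norm_attaining_on X f\<close> unfolding norm_attaining_on_def by blast
  then obtain L where L: "bounded_linear L"
    and L': "\<And>h. ((\<lambda>t. norm (x + t *\<^sub>R h)) has_real_derivative L h) (at 0)"
    using G unfolding gateaux_differentiable_at_def by (metis norm_zero zero_neq_one)
  have "norming_functional x L"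
    using L L' x by (intro norm_derivative_norming_functional) auto
  then have onorm_L: "onorm L = 1" by (simp add: norming_functional_def)
  have f_le: "\<forall>z\<in>X. f z \<le> M * norm z"
    using fnorm_on_bound[OF f X] unfolding M_def by (fastforce intro: order_trans[OF abs_ge_self])
  have M: "0 \<le> M" using fnorm_on_bound[OF f X x(1)] x M_def by simp
  let ?g = "\<lambda>z. M * L z"
  have bl: "bounded_linear ?g"
    using bounded_linear_compose[OF bounded_linear_mult_right L] by simp
  have "onorm ?g = M"
    using onorm_scaleR[OF L, of M] onorm_L M by simp
  moreover have "\<forall>z\<in>X. f z = ?g z"
    using dominated_functional_eq_norm_derivative[OF bounded_linear.linear[OF L] L' X x(1) f f_le] x M
    by simp
  ultimately have "?g \<in> HB_extensions X f"
    using bl unfolding HB_extensions_def M_def by simp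
  moreover have "g = ?g" if "g \<in> HB_extensions X f" for g
    using that x L' unfolding HB_extensions_def M_def
    by (intro bounded_linear_eq_scaled_norm_derivative[OF bounded_linear.linear[OF L]]) auto
  ultimately show "\<exists>!g. g \<in> HB_extensions X f" by blast
qed

section \<open>Property wU forces Gateaux differentiability\<close>

lemma unique_norming_functional_if_property_wU:
  fixes y :: "'a::real_normed_vector"
  assumes wU: "\<forall>X::'a set. subspace X \<and> closed X \<longrightarrow> property_wU X" and y: "y \<noteq> 0"
  shows "\<exists>!g. norming_functional y g"
proof -
  let ?F = "\<lambda>k::real. k *\<^sub>R y"
  have F: "linear ?F" "inj ?F"
    using y bounded_linear_scaleR_left by (auto simp: bounded_linear.linear inj_on_def)
  obtain \<phi> where \<phi>: "linear \<phi>" "\<And>k. \<phi> (k *\<^sub>R y) = k * norm y"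
    using linear_functional_through_injective[OF F bounded_linear.linear[OF bounded_linear_mult_left]]
    by blast
  have "property_wU (range ?F)"
    using wU F closed_range_injective_linear linear_subspace_image[OF F(1) subspace_UNIV] by blast
  moreover have "\<forall>x\<in>range ?F. \<bar>\<phi> x\<bar> \<le> norm x" using \<phi>(2) by (auto simp: abs_mult)
  moreover have "\<phi> ((1 / norm y) *\<^sub>R y) = 1" "norm ((1 / norm y) *\<^sub>R y) = 1" using \<phi>(2) y by auto
  ultimately have "\<exists>!g. bounded_linear g \<and> (\<forall>x\<in>range ?F. g x = \<phi> x) \<and> onorm g = 1"
    using \<phi>(1) by (intro property_wU_unique_norm_one_extension) auto
  moreover have "(\<forall>x\<in>range ?F. g x = \<phi> x) \<longleftrightarrow> g y = norm y" if "bounded_linear g" for g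
    using \<phi>(2)[of 1] linear_scale[OF bounded_linear.linear[OF that]] \<phi>(2) by auto
  ultimately show ?thesis unfolding norming_functional_def by (metis (no_types, lifting))
qed

lemma norm_dominates_pair_functional:
  fixes y h :: "'a::real_normed_vector"
  assumes lower: "\<And>t. norm y + t * d \<le> norm (y + t *\<^sub>R h)" and "d \<le> c"
    and upper: "\<And>t. 0 < t \<Longrightarrow> norm y + t * c \<le> norm (y + t *\<^sub>R h)"
  shows "a * norm y + b * c \<le> norm (a *\<^sub>R y + b *\<^sub>R h)"
proof (cases "a > 0")
  case True
  have line: "norm y + u * c \<le> norm (y + u *\<^sub>R h)" for u
  proof (cases "u > 0")
    case False
    then have "u * c \<le> u * d" using \<open>d \<le> c\<close> by (simp add: mult_left_mono_neg)
    then show ?thesis using lower[of u] by linarith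
  qed (rule upper)
  have "a *\<^sub>R y + b *\<^sub>R h = a *\<^sub>R (y + (b / a) *\<^sub>R h)"
    using True by (simp add: algebra_simps)
  then have "norm (a *\<^sub>R y + b *\<^sub>R h) = a * norm (y + (b / a) *\<^sub>R h)"
    using True by simp
  moreover have "a * norm y + b * c = a * (norm y + (b / a) * c)"
    using True by (simp add: field_simps)
  moreover have "a * (norm y + (b / a) * c) \<le> a * norm (y + (b / a) *\<^sub>R h)"
    using line[of "b / a"] True by (intro mult_left_mono) auto
  ultimately show ?thesis by simp
next
  case False
  have "norm y + c \<le> norm y + norm h"
    using upper[of 1] norm_triangle_ineq[of y h] by simp
  moreover have "norm y - d \<le> norm y + norm h"
    using lower[of "- 1"] norm_triangle_ineq4[of y h] by simp
  ultimately have "\<bar>c\<bar> \<le> norm h" using \<open>d \<le> c\<close> by linarith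
  then have "b * c \<le> \<bar>b\<bar> * norm h"
    by (metis abs_ge_self abs_ge_zero abs_mult mult_left_mono order_trans)
  moreover have "norm (b *\<^sub>R h) - norm (a *\<^sub>R y) \<le> norm (a *\<^sub>R y + b *\<^sub>R h)"
    using norm_diff_ineq[of "b *\<^sub>R h" "a *\<^sub>R y"] by (simp add: add.commute)
  ultimately show ?thesis using False by simp
qed

lemma norming_functional_with_value:
  fixes y h :: "'a::real_normed_vector"
  assumes wU: "\<forall>X::'a set. subspace X \<and> closed X \<longrightarrow> property_wU X" and y: "y \<noteq> 0"
    and g: "norming_functional y g" "g h \<le> c"
    and upper: "\<And>t. 0 < t \<Longrightarrow> norm y + t * c \<le> norm (y + t *\<^sub>R h)"
  shows "\<exists>G. norming_functional y G \<and> G h = c"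
proof (cases "\<exists>k. h = k *\<^sub>R y")
  case True
  then obtain k where k: "h = k *\<^sub>R y" by blast
  define t where "t = 1 / (\<bar>k\<bar> + 1)"
  have t: "0 < t" "0 < 1 + t * k"
    unfolding t_def by (auto simp: field_simps abs_if split: if_splits)
  have "y + t *\<^sub>R h = (1 + t * k) *\<^sub>R y" using k by (simp add: algebra_simps)
  then have "norm (y + t *\<^sub>R h) = (1 + t * k) * norm y" using t(2) by simp
  moreover have "g h = k * norm y"
    using g(1) k by (simp add: norming_functional_def linear_scale bounded_linear.linear)
  ultimately have "norm (y + t *\<^sub>R h) = norm y + t * g h" by (simp add: algebra_simps)
  then have "c \<le> g h" using upper[OF t(1)] t(1) by simp
  with g show ?thesis by (intro exI[of _ g]) simp
next
  case False
  let ?F = "\<lambda>p::real \<times> real. fst p *\<^sub>R y + snd p *\<^sub>R h"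
  have F_lin: "linear ?F" by (rule linearI) (auto simp: algebra_simps)
  have "p = 0" if "?F p = 0" for p
  proof (cases "snd p = 0")
    case True
    then show ?thesis using that y by (simp add: prod_eq_iff)
  next
    case nz: False
    have "snd p *\<^sub>R h = - (fst p *\<^sub>R y)"
      using that by (simp add: eq_neg_iff_add_eq_0 add.commute)
    then have "(1 / snd p) *\<^sub>R (snd p *\<^sub>R h) = (- fst p / snd p) *\<^sub>R y" by simp
    then have "h = (- fst p / snd p) *\<^sub>R y" using nz by simp
    then show ?thesis using False by blast
  qed
  then have F_inj: "inj ?F" using linear_injective_0[OF F_lin] by blast
  have \<psi>_lin: "linear (\<lambda>p::real \<times> real. fst p * norm y + snd p * c)"
    by (rule linearI) (auto simp: algebra_simps)
  obtain \<phi> where \<phi>: "linear \<phi>" "\<And>p. \<phi> (?F p) = fst p * norm y + snd p * c"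
    using linear_functional_through_injective[OF F_lin F_inj \<psi>_lin] by blast
  have dominated: "a * norm y + b * c \<le> norm (a *\<^sub>R y + b *\<^sub>R h)" for a b
    using norming_functional_line[OF g(1)] g(2) upper by (rule norm_dominates_pair_functional)
  have "\<bar>\<phi> (?F p)\<bar> \<le> norm (?F p)" for p
    using dominated[of "fst p" "snd p"] dominated[of "- fst p" "- snd p"] \<phi>(2)
    by (simp add: abs_le_iff norm_minus_commute add.commute)
  then have "\<forall>x\<in>range ?F. \<bar>\<phi> x\<bar> \<le> norm x" by blast
  moreover have "property_wU (range ?F)"
    using wU F_lin F_inj closed_range_injective_linear linear_subspace_image[OF F_lin subspace_UNIV]
    by blast
  moreover have "(1 / norm y) *\<^sub>R y \<in> range ?F"
    using rangeI[of ?F "(1 / norm y, 0)"] by simp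
  moreover have "\<phi> ((1 / norm y) *\<^sub>R y) = 1" "norm ((1 / norm y) *\<^sub>R y) = 1"
    using \<phi>(2)[of "(1 / norm y, 0)"] y by auto
  ultimately have "\<exists>!G. bounded_linear G \<and> (\<forall>x\<in>range ?F. G x = \<phi> x) \<and> onorm G = 1"
    using \<phi>(1) by (intro property_wU_unique_norm_one_extension)
  then obtain G where G: "bounded_linear G" "\<forall>x\<in>range ?F. G x = \<phi> x" "onorm G = 1"
    by blast
  have "G (?F p) = fst p * norm y + snd p * c" for p
    using G(2) \<phi>(2) by simp
  from this[of "(1, 0)"] this[of "(0, 1)"] have "G y = norm y" "G h = c" by simp_all
  with G show ?thesis unfolding norming_functional_def by blast
qed

lemma norm_gateaux_differentiable_if_property_wU:
  fixes y :: "'a::real_normed_vector"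
  assumes wU: "\<forall>X::'a set. subspace X \<and> closed X \<longrightarrow> property_wU X" and y: "y \<noteq> 0"
  shows "gateaux_differentiable_at norm y"
proof -
  obtain g where g: "norming_functional y g" and unique: "\<And>G. norming_functional y G \<Longrightarrow> G = g"
    using unique_norming_functional_if_property_wU[OF wU y] by blast
  have upper: "\<exists>t>0. norm (y + t *\<^sub>R h) < norm y + t * c" if less: "g h < c" for h c
  proof (rule ccontr)
    assume "\<not> ?thesis"
    then have "\<And>t. 0 < t \<Longrightarrow> norm y + t * c \<le> norm (y + t *\<^sub>R h)" by (meson not_le)
    then obtain G where "norming_functional y G" "G h = c"
      using norming_functional_with_value[OF wU y g less_imp_le[OF less]] by blast
    with unique less show False by blast
  qed
  have slope: "((\<lambda>t. (norm (y + t *\<^sub>R h) - norm y) / t) \<longlongrightarrow> g h) (at_right 0)" for h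
    using norming_functional_line[OF g] upper by (intro norm_difference_quotient_tendsto_right)
  have "g (- h) = - g h" for h
    using g by (simp add: norming_functional_def linear_neg bounded_linear.linear)
  then have "((\<lambda>t. norm (y + t *\<^sub>R h)) has_real_derivative g h) (at 0)" for h
    using slope[of h] slope[of "- h"] by (intro norm_line_has_real_derivative) auto
  with g show ?thesis unfolding gateaux_differentiable_at_def norming_functional_def by blast
qed

theorem proposition1p12:
  fixes Y :: "'a::banach itself"
  shows "(\<forall>y::'a. y \<noteq> 0 \<longrightarrow> gateaux_differentiable_at norm y) \<longleftrightarrow>
         (\<forall>X::'a set. subspace X \<and> closed X \<longrightarrow> property_wU X)"
  using property_wU_if_norm_gateaux_differentiable norm_gateaux_differentiable_if_property_wU
  by (intro iffI allI impI) auto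

end
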